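(* Let $f:[0,1]\to[0,1]$ be a continuous surjective function that does not admit a splitting sequence. If $f$ admits a 2-cycle $\{s,t\}$ with $s\in\{0,1\}$, then $(s,t,s,t,\dots)$ and $(t,s,t,s,\dots)$ are endpoints of $\varprojlim f$.
   Context: $\varprojlim f=\{\mathbf x=(x_0,x_1,\dots)\in[0,1]^{\mathbb N}: f(x_{n+1})=x_n\ \forall n\}$ with the product topology. A point $p$ of a continuum $X$ is an endpoint of $X$ if for any two subcontinua $A,B$ of $X$ containing $p$, $A\subseteq B$ or $B\subseteq A$. A 2-cycle is a set $\{s,t\}$ with $s\ne t$, $f(s)=t$, $f(t)=s$. A sequence $(T_n)_{n\in\mathbb N}$ of closed intervals $T_n\subsetneq[0,1]$ (possibly degenerate) is tight if $f(T_{n+1})=T_n$ for every $n$ and $T_n$ is nondegenerate for all sufficiently large $n$. A tight sequence $(T_n)$, $T_n=[l_n,r_n]$, is a splitting sequence admitted by $f$ if there are an infinite set $N\subseteq\mathbb N$ and nondegenerate closed intervals $S_n\subseteq[0,1]$ ($n\in N$) with $S_n\cap T_n\subseteq\{l_n,r_n\}$ and $f(S_n)=f(T_n)$ for all $n\in N$. *)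

theory Defs
  imports "HOL-Analysis.Analysis"
begin

text \<open>The inverse limit of f on [0,1], as a subset of nat => real; the type nat => real
  carries the product topology (HOL-Analysis Function_Topology).\<close>
definition inv_lim :: "(real \<Rightarrow> real) \<Rightarrow> (nat \<Rightarrow> real) set" where
  "inv_lim f = {x. (\<forall>n. x n \<in> {0..1}) \<and> (\<forall>n. f (x (Suc n)) = x n)}"

definition subcontinuum :: "'a::topological_space set \<Rightarrow> 'a set \<Rightarrow> bool" where
  "subcontinuum A X \<longleftrightarrow> A \<subseteq> X \<and> A \<noteq> {} \<and> compact A \<and> connected A"

definition endpoint :: "'a::topological_space set \<Rightarrow> 'a \<Rightarrow> bool" where
  "endpoint X p \<longleftrightarrow> p \<in> X \<and>
     (\<forall>A B. subcontinuum A X \<longrightarrow> subcontinuum B X \<longrightarrow> p \<in> A \<longrightarrow> p \<in> B \<longrightarrow> A \<subseteq> B \<or> B \<subseteq> A)"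

definition two_cycle :: "(real \<Rightarrow> real) \<Rightarrow> real \<Rightarrow> real \<Rightarrow> bool" where
  "two_cycle f s t \<longleftrightarrow> s \<noteq> t \<and> f s = t \<and> f t = s"

definition tight :: "(real \<Rightarrow> real) \<Rightarrow> (nat \<Rightarrow> real) \<Rightarrow> (nat \<Rightarrow> real) \<Rightarrow> bool" where
  "tight f l r \<longleftrightarrow>
     (\<forall>n. 0 \<le> l n \<and> l n \<le> r n \<and> r n \<le> 1 \<and> {l n..r n} \<noteq> {0..1}) \<and>
     (\<forall>n. f ` {l (Suc n)..r (Suc n)} = {l n..r n}) \<and>
     (\<exists>m. \<forall>n\<ge>m. l n < r n)"

definition splitting_seq :: "(real \<Rightarrow> real) \<Rightarrow> (nat \<Rightarrow> real) \<Rightarrow> (nat \<Rightarrow> real) \<Rightarrow> bool" where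
  "splitting_seq f l r \<longleftrightarrow> tight f l r \<and>
     (\<exists>N. infinite N \<and> (\<forall>n\<in>N. \<exists>a b. a < b \<and> {a..b} \<subseteq> {0..1} \<and>
        {a..b} \<inter> {l n..r n} \<subseteq> {l n, r n} \<and> f ` {a..b} = f ` {l n..r n}))"

definition admits_splitting :: "(real \<Rightarrow> real) \<Rightarrow> bool" where
  "admits_splitting f \<longleftrightarrow> (\<exists>l r. splitting_seq f l r)"

end

theory Submission
  imports Defs
begin

text \<open>A subcontinuum of the inverse limit is determined by its coordinate projections, and
  each projection of a subcontinuum is a subinterval of [0,1]. Two subintervals containing 0
  (or both containing 1) are nested. Nesting at level m passes down to every level below m,
  since the projection to level n is the image of the projection to level n + 1 under f.
  Hence if p m \<in> {0,1} for infinitely many m, any two subcontinua through p are nested at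
  every level, so one contains the other. The points of a 2-cycle through 0 or 1 are of this
  kind.\<close>

lemma tendsto_fun_componentwise:
  fixes g :: "'i \<Rightarrow> 'a \<Rightarrow> 'b::topological_space"
  assumes "\<And>a. ((\<lambda>i. g i a) \<longlongrightarrow> x a) F"
  shows "(g \<longlongrightarrow> x) F"
proof -
  have "limitin (product_topology (\<lambda>a. euclidean) UNIV) g x F"
    using assms by (simp add: limitin_componentwise)
  then show ?thesis
    by (simp add: euclidean_product_topology)
qed

lemma inv_lim_image_coord_Suc:
  assumes "A \<subseteq> inv_lim f"
  shows "(\<lambda>x. x n) ` A = f ` (\<lambda>x. x (Suc n)) ` A"
proof -
  have "\<And>x. x \<in> A \<Longrightarrow> f (x (Suc n)) = x n"
    using assms by (auto simp: inv_lim_def)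
  then show ?thesis
    by (auto simp: image_iff)
qed

lemma inv_lim_image_coord_subset_below:
  assumes "A \<subseteq> inv_lim f" "B \<subseteq> inv_lim f" "n \<le> m"
    and "(\<lambda>x. x m) ` A \<subseteq> (\<lambda>x. x m) ` B"
  shows "(\<lambda>x. x n) ` A \<subseteq> (\<lambda>x. x n) ` B"
  using \<open>n \<le> m\<close>
proof (induction n rule: inc_induct)
  case base
  show ?case by fact
next
  case (step n)
  show ?case
    unfolding inv_lim_image_coord_Suc[OF assms(1), of n] inv_lim_image_coord_Suc[OF assms(2), of n]
    by (rule image_mono[OF step.IH])
qed

lemma inv_lim_eq_below:
  assumes "x \<in> inv_lim f" "y \<in> inv_lim f" "x m = y m" "n \<le> m"
  shows "x n = y n"
  using \<open>n \<le> m\<close>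
proof (induction n rule: inc_induct)
  case base
  show ?case by fact
next
  case (step n)
  have "x n = f (x (Suc n))"
    using assms(1) by (simp add: inv_lim_def)
  also have "\<dots> = f (y (Suc n))"
    using step.IH by simp
  also have "\<dots> = y n"
    using assms(2) by (simp add: inv_lim_def)
  finally show ?case .
qed

lemma inv_lim_subset_if_image_coord_subset:
  assumes "A \<subseteq> inv_lim f" "B \<subseteq> inv_lim f" "closed B"
    and "\<And>n. (\<lambda>x. x n) ` A \<subseteq> (\<lambda>x. x n) ` B"
  shows "A \<subseteq> B"
proof
  fix x assume "x \<in> A"
  have "\<forall>n. \<exists>y. y \<in> B \<and> y n = x n"
  proof
    fix n
    have "x n \<in> (\<lambda>y. y n) ` B"
      using assms(4) \<open>x \<in> A\<close> by blast
    then show "\<exists>y. y \<in> B \<and> y n = x n"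
      by auto
  qed
  then obtain y where y: "\<forall>n. y n \<in> B \<and> y n n = x n"
    by (rule choice[THEN exE])
  have "eventually (\<lambda>n. y n k = x k) sequentially" for k
  proof (rule eventually_sequentiallyI)
    fix n assume "k \<le> n"
    have "y n \<in> inv_lim f" "x \<in> inv_lim f"
      using y assms(1,2) \<open>x \<in> A\<close> by auto
    then show "y n k = x k"
      using inv_lim_eq_below[OF _ _ _ \<open>k \<le> n\<close>] y by simp
  qed
  then have "y \<longlonglongrightarrow> x"
    by (intro tendsto_fun_componentwise tendsto_eventually)
  with y show "x \<in> B"
    using closed_sequentially[OF \<open>closed B\<close>] by blast
qed

lemma inv_lim_subset_if_frequently_image_coord_subset:
  assumes "A \<subseteq> inv_lim f" "B \<subseteq> inv_lim f" "closed B"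
    and "\<exists>\<^sub>F m in sequentially. (\<lambda>x. x m) ` A \<subseteq> (\<lambda>x. x m) ` B"
  shows "A \<subseteq> B"
proof (rule inv_lim_subset_if_image_coord_subset[OF assms(1-3)])
  fix n
  obtain m where "n \<le> m" "(\<lambda>x. x m) ` A \<subseteq> (\<lambda>x. x m) ` B"
    using assms(4) unfolding frequently_sequentially by blast
  then show "(\<lambda>x. x n) ` A \<subseteq> (\<lambda>x. x n) ` B"
    by (rule inv_lim_image_coord_subset_below[OF assms(1,2)])
qed

lemma connected_nested_if_common_extreme_point:
  fixes S T :: "real set"
  assumes "connected S" "connected T" "c \<in> S" "c \<in> T"
    and "(\<forall>x\<in>S \<union> T. c \<le> x) \<or> (\<forall>x\<in>S \<union> T. x \<le> c)"
  shows "S \<subseteq> T \<or> T \<subseteq> S"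
proof (rule ccontr)
  assume "\<not> (S \<subseteq> T \<or> T \<subseteq> S)"
  then obtain a b where "a \<in> S" "a \<notin> T" "b \<in> T" "b \<notin> S"
    by blast
  then show False
    using assms connectedD_interval[OF \<open>connected S\<close>] connectedD_interval[OF \<open>connected T\<close>]
    by (smt (verit) UnCI)
qed

lemma connected_image_coord:
  fixes A :: "('a \<Rightarrow> 'b::topological_space) set"
  assumes "connected A"
  shows "connected ((\<lambda>x. x n) ` A)"
  using assms continuous_on_product_coordinates connected_continuous_image
  by (metis continuous_on_subset subset_UNIV)

lemma endpoint_inv_lim_if_frequently_01:
  assumes "p \<in> inv_lim f" "\<exists>\<^sub>F m in sequentially. p m \<in> {0, 1}"
  shows "endpoint (inv_lim f) p"
  unfolding endpoint_def
proof (intro conjI allI impI)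
  fix A B assume A: "subcontinuum A (inv_lim f)" and B: "subcontinuum B (inv_lim f)"
    and "p \<in> A" "p \<in> B"
  have nested: "(\<lambda>x. x m) ` A \<subseteq> (\<lambda>x. x m) ` B \<or> (\<lambda>x. x m) ` B \<subseteq> (\<lambda>x. x m) ` A"
    if "p m \<in> {0, 1}" for m
  proof (rule connected_nested_if_common_extreme_point)
    show "connected ((\<lambda>x. x m) ` A)" "connected ((\<lambda>x. x m) ` B)"
      using A B by (simp_all add: subcontinuum_def connected_image_coord)
    show "p m \<in> (\<lambda>x. x m) ` A" "p m \<in> (\<lambda>x. x m) ` B"
      using \<open>p \<in> A\<close> \<open>p \<in> B\<close> by simp_all
    have "\<forall>y\<in>(\<lambda>x. x m) ` A \<union> (\<lambda>x. x m) ` B. 0 \<le> y \<and> y \<le> 1"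
      using A B by (auto simp: subcontinuum_def inv_lim_def)
    with that show "(\<forall>y\<in>(\<lambda>x. x m) ` A \<union> (\<lambda>x. x m) ` B. p m \<le> y) \<or>
        (\<forall>y\<in>(\<lambda>x. x m) ` A \<union> (\<lambda>x. x m) ` B. y \<le> p m)"
      by auto
  qed
  have AB: "A \<subseteq> inv_lim f" "B \<subseteq> inv_lim f" "closed A" "closed B"
    using A B by (auto simp: subcontinuum_def compact_imp_closed)
  have "(\<exists>\<^sub>F m in sequentially. (\<lambda>x. x m) ` A \<subseteq> (\<lambda>x. x m) ` B) \<or>
      (\<exists>\<^sub>F m in sequentially. (\<lambda>x. x m) ` B \<subseteq> (\<lambda>x. x m) ` A)"
    using frequently_elim1[OF assms(2) nested] by (simp add: frequently_disj_iff)
  then show "A \<subseteq> B \<or> B \<subseteq> A"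
    using inv_lim_subset_if_frequently_image_coord_subset[OF AB(1,2,4)]
      inv_lim_subset_if_frequently_image_coord_subset[OF AB(2,1,3)] by blast
qed (fact assms(1))

theorem lemma3p20:
  fixes f :: "real \<Rightarrow> real" and s t :: real
  assumes "continuous_on {0..1} f"
    and "f ` {0..1} = {0..1}"
    and "\<not> admits_splitting f"
    and "two_cycle f s t"
    and "s \<in> {0, 1}"
  shows "endpoint (inv_lim f) (\<lambda>n. if even n then s else t) \<and>
         endpoint (inv_lim f) (\<lambda>n. if even n then t else s)"
proof -
  have "f s = t" "f t = s"
    using assms(4) by (simp_all add: two_cycle_def)
  moreover have "s \<in> {0..1}" "t \<in> {0..1}"
    using assms(2,5) \<open>f s = t\<close> by auto
  ultimately have orbit: "(\<lambda>n. if even n then s else t) \<in> inv_lim f"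
    "(\<lambda>n. if even n then t else s) \<in> inv_lim f"
    by (auto simp: inv_lim_def)
  have "\<exists>\<^sub>F m in sequentially. even m" "\<exists>\<^sub>F m in sequentially. odd m"
    unfolding frequently_sequentially
    by (metis dvd_triv_left le_add1 mult_2, metis dvd_triv_left even_Suc le_Suc_eq le_add1 mult_2)
  then have "\<exists>\<^sub>F m in sequentially. (if even m then s else t) \<in> {0, 1}"
    "\<exists>\<^sub>F m in sequentially. (if even m then t else s) \<in> {0, 1}"
    using assms(5) by (auto elim: frequently_elim1)
  with orbit show ?thesis
    using endpoint_inv_lim_if_frequently_01 by simp
qed

end
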